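(* Let $p>1$ and let $\varphi$ be an analytic self-map of $\mathbb{D}$ with $\varphi\in S^p$. Then the following are equivalent: (i) $D_\varphi:S^p\to S^p$ is compact; (ii) $C_\varphi:H^p\to S^p$ is compact; (iii) $DC_\varphi:H^p\to H^p$ is compact.
   Context: $\mathbb{D}$ is the open unit disk. For $p>1$, $H^p$ is the Hardy space on $\mathbb{D}$ with norm $\|g\|_{H^p}^p=\sup_{0<r<1}\int_0^{2\pi}|g(re^{i\theta})|^p\frac{d\theta}{2\pi}$; $S^p$ is the space of analytic $f$ on $\mathbb{D}$ with $f'\in H^p$, normed by $\|f\|_{S^p}=|f(0)|+\|f'\|_{H^p}$. $C_\varphi f=f\circ\varphi$, $D_\varphi f=f'\circ\varphi$, and $DC_\varphi f=(f\circ\varphi)'$. *)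

theory Defs
  imports "HOL-Complex_Analysis.Complex_Analysis"
begin

definition int_mean :: "real \<Rightarrow> (complex \<Rightarrow> complex) \<Rightarrow> real \<Rightarrow> real" where
  "int_mean p g r = integral {0..2*pi} (\<lambda>\<theta>. norm (g (complex_of_real r * cis \<theta>)) powr p) / (2*pi)"

definition hardy :: "real \<Rightarrow> (complex \<Rightarrow> complex) set" where
  "hardy p = {g. g holomorphic_on ball 0 1 \<and> bdd_above (int_mean p g ` {0<..<1})}"

definition hardy_norm :: "real \<Rightarrow> (complex \<Rightarrow> complex) \<Rightarrow> real" where
  "hardy_norm p g = (SUP r\<in>{0<..<1}. int_mean p g r) powr (1/p)"

definition Sp :: "real \<Rightarrow> (complex \<Rightarrow> complex) set" where
  "Sp p = {f. f holomorphic_on ball 0 1 \<and> deriv f \<in> hardy p}"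

definition Sp_norm :: "real \<Rightarrow> (complex \<Rightarrow> complex) \<Rightarrow> real" where
  "Sp_norm p f = norm (f 0) + hardy_norm p (deriv f)"

definition compact_op ::
  "((complex \<Rightarrow> complex) \<Rightarrow> (complex \<Rightarrow> complex)) \<Rightarrow> (complex \<Rightarrow> complex) set \<Rightarrow> ((complex \<Rightarrow> complex) \<Rightarrow> real)
    \<Rightarrow> (complex \<Rightarrow> complex) set \<Rightarrow> ((complex \<Rightarrow> complex) \<Rightarrow> real) \<Rightarrow> bool" where
  "compact_op T X NX Y NY \<longleftrightarrow>
     (\<forall>f\<in>X. T f \<in> Y) \<and>
     (\<forall>u::nat \<Rightarrow> complex \<Rightarrow> complex. (\<forall>n. u n \<in> X) \<and> bdd_above (range (\<lambda>n. NX (u n))) \<longrightarrow>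
        (\<exists>r g. strict_mono r \<and> g \<in> Y \<and> (\<lambda>n. NY (\<lambda>z. T (u (r n)) z - g z)) \<longlonglongrightarrow> 0))"

definition comp_op :: "(complex \<Rightarrow> complex) \<Rightarrow> (complex \<Rightarrow> complex) \<Rightarrow> (complex \<Rightarrow> complex)" where
  "comp_op \<phi> f = f \<circ> \<phi>"

definition deriv_comp_op :: "(complex \<Rightarrow> complex) \<Rightarrow> (complex \<Rightarrow> complex) \<Rightarrow> (complex \<Rightarrow> complex)" where
  "deriv_comp_op \<phi> f = deriv f \<circ> \<phi>"

definition diff_comp_op :: "(complex \<Rightarrow> complex) \<Rightarrow> (complex \<Rightarrow> complex) \<Rightarrow> (complex \<Rightarrow> complex)" where
  "diff_comp_op \<phi> f = deriv (f \<circ> \<phi>)"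

end

theory Submission imports Defs begin

text \<open>
  The map \<open>F \<mapsto> F'\<close> identifies \<open>S\<^sup>p\<close> modulo constants with \<open>H\<^sup>p\<close>, isometrically on the
  seminorm part, and \<open>D\<^sub>\<phi> F = C\<^sub>\<phi> F'\<close>; so \<open>D\<^sub>\<phi>\<close> on \<open>S\<^sup>p\<close> is compact iff \<open>C\<^sub>\<phi> : H\<^sup>p \<rightarrow> S\<^sup>p\<close> is.
  Moreover \<open>\<parallel>C\<^sub>\<phi> g - G\<parallel>\<^sub>S = |g(\<phi>(0)) - G(0)| + \<parallel>(DC\<^sub>\<phi>) g - G'\<parallel>\<^sub>H\<close>; the first summand only involves
  point evaluation at \<open>\<phi>(0)\<close>, which is bounded on \<open>H\<^sup>p\<close> by the Cauchy formula, so a bounded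
  sequence has a subsequence along which it converges, and compactness of \<open>C\<^sub>\<phi>\<close> into \<open>S\<^sup>p\<close> is
  equivalent to compactness of \<open>DC\<^sub>\<phi>\<close> into \<open>H\<^sup>p\<close>.
\<close>

lemma int_mean_nonneg: "0 \<le> int_mean p f r"
proof -
  have "0 \<le> integral {0..2*pi} (\<lambda>\<theta>. norm (f (complex_of_real r * cis \<theta>)) powr p)"
    by (cases "(\<lambda>\<theta>. norm (f (complex_of_real r * cis \<theta>)) powr p) integrable_on {0..2*pi}")
       (auto intro!: integral_nonneg simp: not_integrable_integral)
  thus ?thesis unfolding int_mean_def by simp
qed

lemma hardy_norm_nonneg: "0 \<le> hardy_norm p f"
  unfolding hardy_norm_def by simp

lemma int_mean_le_hardy_norm_powr:
  assumes "f \<in> hardy p" "r \<in> {0<..<1}" "p > 0"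
  shows "int_mean p f r \<le> hardy_norm p f powr p"
proof -
  have "bdd_above (int_mean p f ` {0<..<1})" using assms(1) unfolding hardy_def by auto
  hence le: "int_mean p f r \<le> (SUP r\<in>{0<..<1}. int_mean p f r)"
    using assms(2) by (rule cSUP_upper2) simp
  hence "0 \<le> (SUP r\<in>{0<..<1}. int_mean p f r)" using int_mean_nonneg order_trans by blast
  hence "hardy_norm p f powr p = (SUP r\<in>{0<..<1}. int_mean p f r)"
    unfolding hardy_norm_def using assms(3) by (simp add: powr_powr)
  with le show ?thesis by simp
qed

lemma hardy_holomorphic: "g \<in> hardy p \<Longrightarrow> g holomorphic_on ball 0 1"
  unfolding hardy_def by simp

lemma Sp_holomorphic: "f \<in> Sp p \<Longrightarrow> f holomorphic_on ball 0 1"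
  unfolding Sp_def by simp

lemma hardy_norm_le_Sp_norm: "hardy_norm p (deriv f) \<le> Sp_norm p f"
  unfolding Sp_norm_def by simp

definition disc_determined ::
  "(complex \<Rightarrow> complex) set \<Rightarrow> ((complex \<Rightarrow> complex) \<Rightarrow> real) \<Rightarrow> bool" where
  "disc_determined Y N \<longleftrightarrow>
     (\<forall>f g. (\<forall>z\<in>ball 0 1. f z = g z) \<longrightarrow> (f \<in> Y \<longleftrightarrow> g \<in> Y) \<and> N f = N g)"

lemma disc_determinedD:
  assumes "disc_determined Y N" "\<And>z. z \<in> ball 0 1 \<Longrightarrow> f z = g z"
  shows "f \<in> Y \<longleftrightarrow> g \<in> Y" "N f = N g"
proof -
  have "\<forall>z\<in>ball 0 1. f z = g z" using assms(2) by blast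
  thus "f \<in> Y \<longleftrightarrow> g \<in> Y" "N f = N g" using assms(1) unfolding disc_determined_def by blast+
qed

lemma int_mean_cong:
  assumes "\<And>z. z \<in> ball 0 1 \<Longrightarrow> f z = g z" "r \<in> {0<..<1}"
  shows "int_mean p f r = int_mean p g r"
proof -
  have "f (complex_of_real r * cis \<theta>) = g (complex_of_real r * cis \<theta>)" for \<theta>
    using assms(2) by (intro assms(1)) (simp add: norm_mult)
  thus ?thesis unfolding int_mean_def by simp
qed

lemma disc_determined_hardy: "disc_determined (hardy p) (hardy_norm p)"
  unfolding disc_determined_def
proof (intro allI impI)
  fix f g :: "complex \<Rightarrow> complex" assume eq: "\<forall>z\<in>ball 0 1. f z = g z"
  have means: "int_mean p f ` {0<..<1} = int_mean p g ` {0<..<1}"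
    using int_mean_cong[of f g] eq by (intro image_cong) simp_all
  have "f holomorphic_on ball 0 1 \<longleftrightarrow> g holomorphic_on ball 0 1"
    using eq by (intro holomorphic_cong) auto
  with means show "(f \<in> hardy p \<longleftrightarrow> g \<in> hardy p) \<and> hardy_norm p f = hardy_norm p g"
    unfolding hardy_def hardy_norm_def by simp
qed

lemma deriv_cong_ball:
  assumes "\<And>z. z \<in> ball 0 1 \<Longrightarrow> f z = g z" "z \<in> ball (0::complex) 1"
  shows "deriv f z = deriv g z"
proof (rule deriv_cong_ev)
  show "eventually (\<lambda>x. f x = g x) (nhds z)"
    using eventually_nhds_in_open[of "ball 0 1" z] assms by (auto elim!: eventually_mono)
qed simp

lemma disc_determined_Sp: "disc_determined (Sp p) (Sp_norm p)"
  unfolding disc_determined_def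
proof (intro allI impI)
  fix f g :: "complex \<Rightarrow> complex" assume eq: "\<forall>z\<in>ball 0 1. f z = g z"
  have "deriv f \<in> hardy p \<longleftrightarrow> deriv g \<in> hardy p" "hardy_norm p (deriv f) = hardy_norm p (deriv g)"
    using disc_determinedD[OF disc_determined_hardy, of "deriv f" "deriv g"] deriv_cong_ball eq
    by blast+
  moreover have "f holomorphic_on ball 0 1 \<longleftrightarrow> g holomorphic_on ball 0 1"
    using eq by (intro holomorphic_cong) auto
  ultimately show "(f \<in> Sp p \<longleftrightarrow> g \<in> Sp p) \<and> Sp_norm p f = Sp_norm p g"
    unfolding Sp_def Sp_norm_def using eq by simp
qed

subsection \<open>Primitives and the \<open>S\<^sup>p\<close> distance\<close>

lemma holomorphic_primitive_convex:
  fixes g :: "complex \<Rightarrow> complex"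
  assumes "convex S" "open S" "g holomorphic_on S" "a \<in> S"
  obtains F where "F holomorphic_on S" "\<And>z. z \<in> S \<Longrightarrow> (F has_field_derivative g z) (at z)" "F a = c"
proof -
  obtain G where G: "\<And>z. z \<in> S \<Longrightarrow> (G has_field_derivative g z) (at z within S)"
    using holomorphic_convex_primitive'[OF assms(1-3)] by blast
  define F where "F z = G z - G a + c" for z
  have F': "(F has_field_derivative g z) (at z)" if "z \<in> S" for z
    using G[OF that] at_within_open[OF that assms(2)] unfolding F_def
    by (auto intro!: derivative_eq_intros)
  moreover from F' have "F holomorphic_on S"
    using holomorphic_on_open[OF assms(2)] by blast
  ultimately show ?thesis using that by (simp add: F_def)
qed

lemma hardy_primitive:
  assumes "g \<in> hardy p"
  obtains F where "F \<in> Sp p" "F 0 = c" "\<And>z. z \<in> ball 0 1 \<Longrightarrow> deriv F z = g z"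
    "Sp_norm p F = norm c + hardy_norm p g"
proof -
  from hardy_holomorphic[OF assms] obtain F where F: "F holomorphic_on ball 0 1" "F 0 = c"
      "\<And>z. z \<in> ball 0 1 \<Longrightarrow> (F has_field_derivative g z) (at z)"
    using holomorphic_primitive_convex[where S="ball 0 1" and a=0 and c=c] by auto
  hence F': "\<And>z. z \<in> ball 0 1 \<Longrightarrow> deriv F z = g z" using DERIV_imp_deriv by blast
  hence "deriv F \<in> hardy p" "hardy_norm p (deriv F) = hardy_norm p g"
    using disc_determinedD[OF disc_determined_hardy, of "deriv F" g] assms by blast+
  with F F' that show ?thesis unfolding Sp_def Sp_norm_def by simp
qed

lemma Sp_norm_diff:
  assumes "f holomorphic_on ball 0 1" "G holomorphic_on ball 0 1"
  shows "Sp_norm p (\<lambda>z. f z - G z) = norm (f 0 - G 0) + hardy_norm p (\<lambda>z. deriv f z - deriv G z)"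
proof -
  have "deriv (\<lambda>z. f z - G z) z = deriv f z - deriv G z" if "z \<in> ball 0 1" for z
    using assms that by (intro deriv_diff holomorphic_on_imp_differentiable_at) auto
  hence "hardy_norm p (deriv (\<lambda>z. f z - G z)) = hardy_norm p (\<lambda>z. deriv f z - deriv G z)"
    by (rule disc_determinedD(2)[OF disc_determined_hardy])
  thus ?thesis unfolding Sp_norm_def by simp
qed

lemma Sp_norm_diff_tendsto_0_iff:
  assumes "\<And>n. f n holomorphic_on ball 0 1" "G holomorphic_on ball 0 1"
  shows "(\<lambda>n. Sp_norm p (\<lambda>z. f n z - G z)) \<longlonglongrightarrow> 0 \<longleftrightarrow>
         (\<lambda>n. f n 0) \<longlonglongrightarrow> G 0 \<and> (\<lambda>n. hardy_norm p (\<lambda>z. deriv (f n) z - deriv G z)) \<longlonglongrightarrow> 0"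
    (is "?S \<longlonglongrightarrow> 0 \<longleftrightarrow> _ \<and> ?H \<longlonglongrightarrow> 0")
proof -
  define E where "E n = norm (f n 0 - G 0)" for n
  have S: "?S = (\<lambda>n. E n + ?H n)" unfolding E_def using Sp_norm_diff[OF assms(1,2)] by simp
  have E: "(\<lambda>n. f n 0) \<longlonglongrightarrow> G 0 \<longleftrightarrow> E \<longlonglongrightarrow> 0"
    unfolding E_def by (simp add: tendsto_norm_zero_iff LIM_zero_iff)
  have "E \<longlonglongrightarrow> 0 \<and> ?H \<longlonglongrightarrow> 0" if sum: "(\<lambda>n. E n + ?H n) \<longlonglongrightarrow> 0"
  proof
    show "E \<longlonglongrightarrow> 0"
      by (rule real_tendsto_sandwich[where f="\<lambda>n. 0", OF _ _ _ sum])
         (auto simp: E_def hardy_norm_nonneg)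
    show "?H \<longlonglongrightarrow> 0"
      by (rule real_tendsto_sandwich[where f="\<lambda>n. 0", OF _ _ _ sum])
         (auto simp: E_def hardy_norm_nonneg)
  qed
  thus ?thesis unfolding S E using tendsto_add_zero by blast
qed

subsection \<open>Boundedness of point evaluation on \<open>H\<^sup>p\<close>\<close>

lemma norm_le_int_mean:
  fixes f :: "complex \<Rightarrow> complex"
  assumes p: "p \<ge> 1" and hol: "f holomorphic_on ball 0 1" and a: "norm a < r" "r < 1"
  shows "norm (f a) \<le> r / (r - norm a) * (1 + int_mean p f r)"
proof -
  have r: "0 < r" using a norm_ge_zero[of a] by linarith
  define K where "K = r / (r - norm a)"
  define h where "h t = norm (f (complex_of_real r * cis t)) powr p" for t
  define k where "k t = f (r * cis t) / (r * cis t - a) * r * \<i> * cis t" for t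
  have hol_r: "f holomorphic_on cball 0 r"
    by (rule holomorphic_on_subset[OF hol]) (use a in auto)
  hence cont: "continuous_on (cball 0 r) f" by (rule holomorphic_on_imp_continuous_on)
  have "((\<lambda>u. f u / (u - a)) has_contour_integral (2 * of_real pi * \<i> * f a)) (circlepath 0 r)"
    using Cauchy_integral_circlepath_simple[OF hol_r] a by simp
  hence k_int: "(k has_integral (2 * of_real pi * \<i> * f a)) {0..2*pi}"
    using has_contour_integral_part_circlepath_iff[of 0 "2*pi"]
    unfolding circlepath_def k_def by simp
  have "continuous_on {0..2*pi} (\<lambda>t. f (complex_of_real r * cis t))"
    by (rule continuous_on_compose2[OF cont]) (use r in \<open>auto intro!: continuous_intros simp: norm_mult\<close>)
  hence h_cont: "continuous_on {0..2*pi} h"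
    unfolding h_def using p by (intro continuous_on_powr' continuous_intros) auto
  have k_le: "norm (k t) \<le> K * (1 + h t)" for t
  proof -
    have dist: "r - norm a \<le> norm (r * cis t - a)"
      using norm_triangle_ineq2[of "r * cis t" a] r by (simp add: norm_mult)
    have f_le: "norm (f (r * cis t)) \<le> 1 + h t"
      \<comment> \<open>\<open>x \<le> 1 + x\<^sup>p\<close> for \<open>x \<ge> 0\<close>, \<open>p \<ge> 1\<close>\<close>
    proof (cases "norm (f (r * cis t)) \<le> 1")
      case False
      thus ?thesis using powr_mono[of 1 p "norm (f (r * cis t))"] p unfolding h_def by simp
    qed (simp add: h_def add_increasing2)
    have "norm (k t) = norm (f (r * cis t)) * r / norm (r * cis t - a)"
      unfolding k_def using r by (simp add: norm_mult norm_divide)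
    also have "\<dots> \<le> (1 + h t) * r / (r - norm a)"
      using f_le dist a r by (intro frac_le mult_right_mono) (auto simp: h_def)
    finally show ?thesis by (simp add: K_def mult.commute)
  qed
  have h_int: "integral {0..2*pi} h = 2 * pi * int_mean p f r"
    unfolding int_mean_def h_def by simp
  have "2 * pi * norm (f a) = norm (integral {0..2*pi} k)"
    using integral_unique[OF k_int] by (simp add: norm_mult)
  also have "\<dots> \<le> integral {0..2*pi} (\<lambda>t. K * (1 + h t))"
    by (rule integral_norm_bound_integral[OF has_integral_integrable[OF k_int] _ k_le])
       (intro integrable_continuous_interval continuous_intros h_cont)
  also have "\<dots> = K * (2 * pi + integral {0..2*pi} h)"
    using integral_add[OF integrable_const_ivl integrable_continuous_interval[OF h_cont]] by simp
  also have "\<dots> = 2 * pi * (K * (1 + int_mean p f r))"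
    unfolding h_int by (simp add: algebra_simps)
  finally have "norm (f a) \<le> K * (1 + int_mean p f r)" by (simp add: mult_le_cancel_left_pos)
  thus ?thesis by (simp add: K_def)
qed

lemma hardy_bounded_point_eval:
  assumes "p \<ge> 1" "\<And>n. u n \<in> hardy p" "bdd_above (range (\<lambda>n. hardy_norm p (u n)))"
    and "a \<in> ball 0 1"
  shows "bounded (range (\<lambda>n. u n a))"
proof -
  obtain B where B: "\<And>n. hardy_norm p (u n) \<le> B" using assms(3) unfolding bdd_above_def by auto
  define r where "r = (1 + norm a) / 2"
  have r: "norm a < r" "r < 1" "r \<in> {0<..<1}"
    using assms(4) unfolding r_def by (auto simp: add_pos_nonneg)
  have "norm (u n a) \<le> r / (r - norm a) * (1 + B powr p)" for n
  proof -
    have "norm (u n a) \<le> r / (r - norm a) * (1 + int_mean p (u n) r)"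
      using norm_le_int_mean[OF assms(1) hardy_holomorphic[OF assms(2)] r(1,2)] .
    also have "\<dots> \<le> r / (r - norm a) * (1 + B powr p)"
    proof (intro mult_left_mono add_left_mono)
      have "int_mean p (u n) r \<le> hardy_norm p (u n) powr p"
        using int_mean_le_hardy_norm_powr assms(1,2) r(3) by force
      also have "\<dots> \<le> B powr p"
        using B[of n] hardy_norm_nonneg assms(1) by (intro powr_mono2) auto
      finally show "int_mean p (u n) r \<le> B powr p" .
    qed (use r in auto)
    finally show ?thesis .
  qed
  thus ?thesis by (intro boundedI) auto
qed

lemma compact_opI:
  assumes "\<And>f. f \<in> X \<Longrightarrow> T f \<in> Y"
    and "\<And>u :: nat \<Rightarrow> complex \<Rightarrow> complex. (\<And>n. u n \<in> X) \<Longrightarrow> bdd_above (range (\<lambda>n. NX (u n)))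
      \<Longrightarrow> \<exists>r g. strict_mono r \<and> g \<in> Y \<and> (\<lambda>n. NY (\<lambda>z. T (u (r n)) z - g z)) \<longlonglongrightarrow> 0"
  shows "compact_op T X NX Y NY"
  unfolding compact_op_def
proof (intro conjI ballI allI impI)
  fix u :: "nat \<Rightarrow> complex \<Rightarrow> complex"
  assume "(\<forall>n. u n \<in> X) \<and> bdd_above (range (\<lambda>n. NX (u n)))"
  thus "\<exists>r g. strict_mono r \<and> g \<in> Y \<and> (\<lambda>n. NY (\<lambda>z. T (u (r n)) z - g z)) \<longlonglongrightarrow> 0"
    using assms(2)[of u] by blast
qed (rule assms(1))

lemma compact_opD:
  fixes u :: "nat \<Rightarrow> complex \<Rightarrow> complex"
  assumes "compact_op T X NX Y NY" "\<And>n. u n \<in> X" "bdd_above (range (\<lambda>n. NX (u n)))"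
  obtains r g where "strict_mono r" "g \<in> Y" "(\<lambda>n. NY (\<lambda>z. T (u (r n)) z - g z)) \<longlonglongrightarrow> 0"
proof -
  have "(\<forall>n. u n \<in> X) \<and> bdd_above (range (\<lambda>n. NX (u n)))" using assms(2,3) by blast
  from mp[OF spec[OF conjunct2[OF assms(1)[unfolded compact_op_def]], of u] this]
  show thesis using that by blast
qed

lemma compact_op_factor_through:
  assumes T: "compact_op T X' NX' Y NY" and Y: "disc_determined Y NY"
    and lift: "\<And>g. g \<in> X \<Longrightarrow> \<exists>f\<in>X'. NX' f \<le> NX g \<and> (\<forall>z\<in>ball 0 1. T f z = T' g z)"
  shows "compact_op T' X NX Y NY"
proof -
  define L where "L g = (SOME f. f \<in> X' \<and> NX' f \<le> NX g \<and> (\<forall>z\<in>ball 0 1. T f z = T' g z))" for g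
  have L: "L g \<in> X'" "NX' (L g) \<le> NX g" "\<And>z. z \<in> ball 0 1 \<Longrightarrow> T (L g) z = T' g z"
    if "g \<in> X" for g
    using someI_ex[OF lift[OF that, unfolded Bex_def]] unfolding L_def by blast+
  show ?thesis
  proof (rule compact_opI)
    fix g assume g: "g \<in> X"
    have "T (L g) \<in> Y" using bspec[OF conjunct1[OF T[unfolded compact_op_def]] L(1)[OF g]] .
    moreover have "T (L g) \<in> Y \<longleftrightarrow> T' g \<in> Y"
      by (rule disc_determinedD(1)[OF Y]) (rule L(3)[OF g])
    ultimately show "T' g \<in> Y" by simp
  next
    fix u :: "nat \<Rightarrow> complex \<Rightarrow> complex"
    assume u: "\<And>n. u n \<in> X" and bdd: "bdd_above (range (\<lambda>n. NX (u n)))"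
    obtain M where M: "\<And>n. NX (u n) \<le> M" using bdd unfolding bdd_above_def by blast
    have "NX' (L (u n)) \<le> M" for n using order_trans[OF L(2)[OF u] M] .
    hence "bdd_above (range (\<lambda>n. NX' (L (u n))))" by (intro bdd_aboveI2)
    then obtain r G where rG: "strict_mono r" "G \<in> Y"
        "(\<lambda>n. NY (\<lambda>z. T (L (u (r n))) z - G z)) \<longlonglongrightarrow> 0"
      by (rule compact_opD[OF T L(1)[OF u]])
    have "NY (\<lambda>z. T (L (u (r n))) z - G z) = NY (\<lambda>z. T' (u (r n)) z - G z)" for n
      by (rule disc_determinedD(2)[OF Y]) (simp add: L(3)[OF u])
    hence "(\<lambda>n. NY (\<lambda>z. T' (u (r n)) z - G z)) \<longlonglongrightarrow> 0" using rG(3) by simp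
    with rG(1,2) show "\<exists>r g. strict_mono r \<and> g \<in> Y \<and> (\<lambda>n. NY (\<lambda>z. T' (u (r n)) z - g z)) \<longlonglongrightarrow> 0"
      by blast
  qed
qed

lemma compact_deriv_comp_op_iff_compact_comp_op:
  assumes "\<phi> ` ball 0 1 \<subseteq> ball 0 1"
  shows "compact_op (deriv_comp_op \<phi>) (Sp p) (Sp_norm p) (Sp p) (Sp_norm p)
     \<longleftrightarrow> compact_op (comp_op \<phi>) (hardy p) (hardy_norm p) (Sp p) (Sp_norm p)"
proof
  assume D: "compact_op (deriv_comp_op \<phi>) (Sp p) (Sp_norm p) (Sp p) (Sp_norm p)"
  have "\<exists>F\<in>Sp p. Sp_norm p F \<le> hardy_norm p g
      \<and> (\<forall>z\<in>ball 0 1. deriv_comp_op \<phi> F z = comp_op \<phi> g z)" if g: "g \<in> hardy p" for g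
  proof -
    obtain F where F: "F \<in> Sp p" "F 0 = 0" "\<And>z. z \<in> ball 0 1 \<Longrightarrow> deriv F z = g z"
        "Sp_norm p F = norm (0::complex) + hardy_norm p g"
      using hardy_primitive[OF g, where c=0] by blast
    have "deriv_comp_op \<phi> F z = comp_op \<phi> g z" if "z \<in> ball 0 1" for z
    proof -
      have "\<phi> z \<in> ball 0 1" using assms that by blast
      thus ?thesis unfolding deriv_comp_op_def comp_op_def by (simp add: F(3))
    qed
    moreover have "Sp_norm p F \<le> hardy_norm p g" using F(4) by simp
    ultimately show ?thesis using F(1) by (intro bexI[of _ F] conjI ballI)
  qed
  thus "compact_op (comp_op \<phi>) (hardy p) (hardy_norm p) (Sp p) (Sp_norm p)"
    by (rule compact_op_factor_through[OF D disc_determined_Sp])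
next
  assume C: "compact_op (comp_op \<phi>) (hardy p) (hardy_norm p) (Sp p) (Sp_norm p)"
  have "\<exists>g\<in>hardy p. hardy_norm p g \<le> Sp_norm p F
      \<and> (\<forall>z\<in>ball 0 1. comp_op \<phi> g z = deriv_comp_op \<phi> F z)" if "F \<in> Sp p" for F
  proof (intro bexI[of _ "deriv F"] conjI ballI)
    show "deriv F \<in> hardy p" using that unfolding Sp_def by simp
  qed (simp_all add: hardy_norm_le_Sp_norm deriv_comp_op_def comp_op_def)
  thus "compact_op (deriv_comp_op \<phi>) (Sp p) (Sp_norm p) (Sp p) (Sp_norm p)"
    by (rule compact_op_factor_through[OF C disc_determined_Sp])
qed

lemma comp_op_holomorphic:
  assumes "\<phi> holomorphic_on ball 0 1" "\<phi> ` ball 0 1 \<subseteq> ball 0 1" "g holomorphic_on ball 0 1"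
  shows "comp_op \<phi> g holomorphic_on ball 0 1"
  unfolding comp_op_def using holomorphic_on_compose_gen[OF assms(1,3,2)] .

lemma comp_op_in_Sp_iff:
  assumes "\<phi> holomorphic_on ball 0 1" "\<phi> ` ball 0 1 \<subseteq> ball 0 1" "g holomorphic_on ball 0 1"
  shows "comp_op \<phi> g \<in> Sp p \<longleftrightarrow> diff_comp_op \<phi> g \<in> hardy p"
  using comp_op_holomorphic[OF assms] unfolding Sp_def diff_comp_op_def comp_op_def by simp

lemma compact_diff_comp_op_if_compact_comp_op:
  assumes \<phi>: "\<phi> holomorphic_on ball 0 1" "\<phi> ` ball 0 1 \<subseteq> ball 0 1"
    and C: "compact_op (comp_op \<phi>) (hardy p) (hardy_norm p) (Sp p) (Sp_norm p)"
  shows "compact_op (diff_comp_op \<phi>) (hardy p) (hardy_norm p) (hardy p) (hardy_norm p)"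
proof (rule compact_opI)
  fix g assume g: "g \<in> hardy p"
  hence "comp_op \<phi> g \<in> Sp p" using bspec[OF conjunct1[OF C[unfolded compact_op_def]]] by blast
  thus "diff_comp_op \<phi> g \<in> hardy p" using comp_op_in_Sp_iff[OF \<phi> hardy_holomorphic[OF g]] by simp
next
  fix u :: "nat \<Rightarrow> complex \<Rightarrow> complex"
  assume u: "\<And>n. u n \<in> hardy p" and bdd: "bdd_above (range (\<lambda>n. hardy_norm p (u n)))"
  obtain r G where rG: "strict_mono r" "G \<in> Sp p"
      "(\<lambda>n. Sp_norm p (\<lambda>z. comp_op \<phi> (u (r n)) z - G z)) \<longlonglongrightarrow> 0"
    by (rule compact_opD[OF C u bdd])
  have hol: "comp_op \<phi> (u (r n)) holomorphic_on ball 0 1" for n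
    using comp_op_holomorphic[OF \<phi> hardy_holomorphic[OF u]] .
  have "(\<lambda>n. hardy_norm p (\<lambda>z. deriv (comp_op \<phi> (u (r n))) z - deriv G z)) \<longlonglongrightarrow> 0"
    using iffD1[OF Sp_norm_diff_tendsto_0_iff[OF hol Sp_holomorphic[OF rG(2)]] rG(3)] by (rule conjunct2)
  hence "(\<lambda>n. hardy_norm p (\<lambda>z. diff_comp_op \<phi> (u (r n)) z - deriv G z)) \<longlonglongrightarrow> 0"
    unfolding diff_comp_op_def comp_op_def .
  moreover have "deriv G \<in> hardy p" using rG(2) unfolding Sp_def by simp
  ultimately show "\<exists>r g. strict_mono r \<and> g \<in> hardy p
      \<and> (\<lambda>n. hardy_norm p (\<lambda>z. diff_comp_op \<phi> (u (r n)) z - g z)) \<longlonglongrightarrow> 0"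
    using rG(1) by blast
qed

lemma compact_comp_op_if_compact_diff_comp_op:
  assumes p: "p \<ge> 1" and \<phi>: "\<phi> holomorphic_on ball 0 1" "\<phi> ` ball 0 1 \<subseteq> ball 0 1"
    and DC: "compact_op (diff_comp_op \<phi>) (hardy p) (hardy_norm p) (hardy p) (hardy_norm p)"
  shows "compact_op (comp_op \<phi>) (hardy p) (hardy_norm p) (Sp p) (Sp_norm p)"
proof (rule compact_opI)
  fix g assume g: "g \<in> hardy p"
  hence "diff_comp_op \<phi> g \<in> hardy p" using bspec[OF conjunct1[OF DC[unfolded compact_op_def]]] by blast
  thus "comp_op \<phi> g \<in> Sp p" using comp_op_in_Sp_iff[OF \<phi> hardy_holomorphic[OF g]] by simp
next
  fix u :: "nat \<Rightarrow> complex \<Rightarrow> complex"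
  assume u: "\<And>n. u n \<in> hardy p" and bdd: "bdd_above (range (\<lambda>n. hardy_norm p (u n)))"
  obtain r h where rh: "strict_mono r" "h \<in> hardy p"
      "(\<lambda>n. hardy_norm p (\<lambda>z. diff_comp_op \<phi> (u (r n)) z - h z)) \<longlonglongrightarrow> 0"
    by (rule compact_opD[OF DC u bdd])
  have "\<phi> 0 \<in> ball 0 1" using \<phi>(2) by (simp add: image_subset_iff)
  hence "bounded (range (\<lambda>n. u n (\<phi> 0)))" by (rule hardy_bounded_point_eval[OF p u bdd])
  hence "bounded (range (\<lambda>n. u (r n) (\<phi> 0)))" by (rule bounded_subset) auto
  then obtain s c where s: "strict_mono s" "(\<lambda>n. u (r (s n)) (\<phi> 0)) \<longlonglongrightarrow> c"
    using bounded_imp_convergent_subsequence[of "\<lambda>n. u (r n) (\<phi> 0)"] unfolding o_def by blast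
  obtain G where G: "G \<in> Sp p" "G 0 = c" "\<And>z. z \<in> ball 0 1 \<Longrightarrow> deriv G z = h z"
    using hardy_primitive[OF rh(2), where c=c] by blast
  have hol: "comp_op \<phi> (u (r (s n))) holomorphic_on ball 0 1" for n
    using comp_op_holomorphic[OF \<phi> hardy_holomorphic[OF u]] .
  have "hardy_norm p (\<lambda>z. diff_comp_op \<phi> (u (r (s n))) z - h z)
      = hardy_norm p (\<lambda>z. deriv (comp_op \<phi> (u (r (s n)))) z - deriv G z)" for n
    by (rule disc_determinedD(2)[OF disc_determined_hardy])
       (simp add: G(3) diff_comp_op_def comp_op_def)
  hence "(\<lambda>n. hardy_norm p (\<lambda>z. deriv (comp_op \<phi> (u (r (s n)))) z - deriv G z)) \<longlonglongrightarrow> 0"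
    using LIMSEQ_subseq_LIMSEQ[OF rh(3) s(1)] unfolding o_def by simp
  moreover have "(\<lambda>n. comp_op \<phi> (u (r (s n))) 0) \<longlonglongrightarrow> G 0"
    using s(2) unfolding G(2) comp_op_def o_def .
  ultimately have "(\<lambda>n. Sp_norm p (\<lambda>z. comp_op \<phi> (u (r (s n))) z - G z)) \<longlonglongrightarrow> 0"
    using Sp_norm_diff_tendsto_0_iff[where f="\<lambda>n. comp_op \<phi> (u (r (s n)))" and p=p,
        OF hol Sp_holomorphic[OF G(1)]] by blast
  moreover have "strict_mono (\<lambda>n. r (s n))" using strict_mono_o[OF rh(1) s(1)] unfolding o_def .
  ultimately show "\<exists>r g. strict_mono r \<and> g \<in> Sp p
      \<and> (\<lambda>n. Sp_norm p (\<lambda>z. comp_op \<phi> (u (r n)) z - g z)) \<longlonglongrightarrow> 0"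
    using G(1) by blast
qed

theorem theorem3p8:
  fixes p :: real and \<phi> :: "complex \<Rightarrow> complex"
  assumes "p > 1"
    and "\<phi> holomorphic_on ball 0 1"
    and "\<phi> ` ball 0 1 \<subseteq> ball 0 1"
    and "\<phi> \<in> Sp p"
  shows "(compact_op (deriv_comp_op \<phi>) (Sp p) (Sp_norm p) (Sp p) (Sp_norm p)
            \<longleftrightarrow> compact_op (comp_op \<phi>) (hardy p) (hardy_norm p) (Sp p) (Sp_norm p))
       \<and> (compact_op (comp_op \<phi>) (hardy p) (hardy_norm p) (Sp p) (Sp_norm p)
            \<longleftrightarrow> compact_op (diff_comp_op \<phi>) (hardy p) (hardy_norm p) (hardy p) (hardy_norm p))"
  using compact_deriv_comp_op_iff_compact_comp_op[OF assms(3)]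
    compact_diff_comp_op_if_compact_comp_op[OF assms(2,3)]
    compact_comp_op_if_compact_diff_comp_op[OF _ assms(2,3)] assms(1)
  by auto

end
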